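(* Let $p\in(0,1)$. The GHoC Markov chain with state space $S=\mathbb N_0\cup\{\infty\}$ and transition matrix $\Pi_p$ possesses a unique stationary distribution; let $\mathbb P_p^{GHoC}$ denote the law of the corresponding stationary two-sided chain $(n_i)_{i\in\mathbb{Z}}$. Then the sequence $(\tau(n_i))_{i\in\mathbb{Z}}$ is distributed according to the TBF $\mu'_p$, i.e. $\tau(\mathbb P_p^{GHoC})=\mu'_p$.
   Context: Fix $p\in(0,1)$. $\Omega=\{0,1\}^{\mathbb{Z}}$, $\mu_p=\mathrm{Ber}(p)^{\otimes\mathbb{Z}}$, $T:\Omega\to\Omega$, $(T\omega)_i=\omega_i\big(1-(1-\omega_{i-1})(1-\omega_{i+1})\big)$, and the TBF is $\mu'_p=\mu_p\circ T^{-1}$ on $\Omega'=T(\Omega)$. Let $\lambda_{PF}=\tfrac12\big(1-p+\sqrt{(1-p)(3p+1)}\big)$, $\lambda_r=\tfrac12\big(1-p-\sqrt{(1-p)(3p+1)}\big)$, $a=\lambda_r/\lambda_{PF}\in(-1,0)$, and define $g_p:S\to[0,1]$ by $g_p(1)=1-p$, $g_p(\infty)=\lambda_{PF}$, and for $n\ge2$: $g_p(n)=\dfrac{(-1)^{n+1}|a|^n\frac{\lambda_{PF}}{1-\lambda_r}+\frac{\lambda_{PF}}{1-\lambda_{PF}}}{(-1)^n|a|^{n-1}\frac{1}{1-\lambda_r}+\frac{1}{1-\lambda_{PF}}}$. The generalized house-of-cards (GHoC) chain on $S$ (with $\infty+1=\infty$) has transition probabilities: $\Pi_p(0,1)=1$;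 $\Pi_p(1,1)=p$, $\Pi_p(1,2)=1-p$; for $i\in\{2,3,\dots\}\cup\{\infty\}$, $\Pi_p(i,i+1)=g_p(i)$ and $\Pi_p(i,0)=1-g_p(i)$; all other entries are $0$. (The state $n_i$ encodes the distance from site $i$ to the nearest pair of adjacent occupied sites in its past, with value $0$ when the two preceding sites are (empty, occupied).) The map $\tau:S\to\{0,1\}$ is $\tau(n)=\mathbb 1_{\{0,1\}}(n)$, applied coordinatewise to paths. *)

theory Defs
  imports "HOL-Probability.Probability" "HOL-Library.Extended_Nat"
begin

text \<open>Configurations in {0,1}^Z are modelled as int => bool (True = occupied = 1).\<close>

definition Omega_M :: "(int \<Rightarrow> bool) measure" where
  "Omega_M = PiM UNIV (\<lambda>_::int. count_space (UNIV::bool set))"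

definition mu_p :: "real \<Rightarrow> (int \<Rightarrow> bool) measure" where
  "mu_p p = PiM UNIV (\<lambda>_::int. measure_pmf (bernoulli_pmf p))"

definition T_map :: "(int \<Rightarrow> bool) \<Rightarrow> int \<Rightarrow> bool" where
  "T_map \<omega> i = (\<omega> i \<and> (\<omega> (i - 1) \<or> \<omega> (i + 1)))"

definition TBF :: "real \<Rightarrow> (int \<Rightarrow> bool) measure" where
  "TBF p = distr (mu_p p) Omega_M T_map"

definition lam_PF :: "real \<Rightarrow> real" where
  "lam_PF p = (1 - p + sqrt ((1 - p) * (3 * p + 1))) / 2"

definition lam_r :: "real \<Rightarrow> real" where
  "lam_r p = (1 - p - sqrt ((1 - p) * (3 * p + 1))) / 2"

definition a_ratio :: "real \<Rightarrow> real" where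
  "a_ratio p = lam_r p / lam_PF p"

text \<open>g_p; the value at 0 is irrelevant (never used) and set to 0.\<close>
definition g_p :: "real \<Rightarrow> enat \<Rightarrow> real" where
  "g_p p x = (case x of
      enat n \<Rightarrow>
        (if n = 1 then 1 - p
         else if 2 \<le> n then
           ((-1) ^ (n + 1) * \<bar>a_ratio p\<bar> ^ n * (lam_PF p / (1 - lam_r p))
              + lam_PF p / (1 - lam_PF p))
           / ((-1) ^ n * \<bar>a_ratio p\<bar> ^ (n - 1) * (1 / (1 - lam_r p))
              + 1 / (1 - lam_PF p))
         else 0)
    | \<infinity> \<Rightarrow> lam_PF p)"

text \<open>Transition matrix Pi_p (note \<infinity> + 1 = \<infinity> in enat).\<close>
definition Pi_p :: "real \<Rightarrow> enat \<Rightarrow> enat \<Rightarrow> real" where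
  "Pi_p p i j =
     (if i = 0 then (if j = 1 then 1 else 0)
      else if i = 1 then (if j = 1 then p else if j = 2 then 1 - p else 0)
      else (if j = i + 1 then g_p p i else if j = 0 then 1 - g_p p i else 0))"

definition stationary_dist :: "real \<Rightarrow> enat pmf \<Rightarrow> bool" where
  "stationary_dist p \<pi> \<longleftrightarrow>
     (\<forall>t. pmf \<pi> t = (\<Sum>\<^sub>\<infinity>s. pmf \<pi> s * Pi_p p s t))"

definition S_path_M :: "(int \<Rightarrow> enat) measure" where
  "S_path_M = PiM UNIV (\<lambda>_::int. count_space (UNIV::enat set))"

definition stationary_chain_law :: "real \<Rightarrow> enat pmf \<Rightarrow> (int \<Rightarrow> enat) measure \<Rightarrow> bool" where
  "stationary_chain_law p \<pi> P \<longleftrightarrow>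
     sets P = sets S_path_M \<and> prob_space P \<and>
     (\<forall>(k::int) (xs::enat list). xs \<noteq> [] \<longrightarrow>
        emeasure P {n \<in> space P. \<forall>j < length xs. n (k + int j) = xs ! j}
        = ennreal (pmf \<pi> (xs ! 0) * (\<Prod>j < length xs - 1. Pi_p p (xs ! j) (xs ! Suc j))))"

definition tau :: "enat \<Rightarrow> bool" where
  "tau n \<longleftrightarrow> n \<in> {0, 1}"

end

theory Submission
  imports Defs
begin

(* Let \<omega> be Bernoulli(p) and x = T \<omega> its thinning. Occupied sites of x come in runs of length
   at least two, so the state n_i of site i (0 or 1 on occupied sites, one more than the distance
   to the last occupied site otherwise) satisfies n_(i+1) = f(n_i, x_(i+1)) and \<tau>(n_i) = x_i.
   The probability that n_k = s and that x continues with a given word w factorises as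
   \<pi>(s) times the product of the transition probabilities along the (unique) path of states
   emitting w. This reduces to counting Bernoulli words without two adjacent ones: their
   probabilities B_m satisfy B_(m+2) = (1-p) B_(m+1) + p(1-p) B_m, whose characteristic roots are
   \<lambda>_PF and \<lambda>_r, and g_p(n) = B_(n+1) / B_n. Hence the law of (n_i) is a stationary chain
   with transition matrix \<Pi>_p and marginal \<pi>, and its \<tau>-image is the TBF. Conversely the
   balance equations determine any stationary distribution up to a factor, and a measure on
   S^Z is determined by its cylinder probabilities, so every stationary chain law is this one. *)

section \<open>Probabilities of Bernoulli words\<close>

definition word_weight :: "real \<Rightarrow> bool list \<Rightarrow> real" where
  "word_weight p bs = (\<Prod>b\<leftarrow>bs. if b then p else 1 - p)"

primrec word_prob :: "real \<Rightarrow> nat \<Rightarrow> (bool list \<Rightarrow> bool) \<Rightarrow> real" where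
  "word_prob p 0 P = (if P [] then 1 else 0)"
| "word_prob p (Suc n) P =
     p * word_prob p n (\<lambda>bs. P (True # bs)) + (1 - p) * word_prob p n (\<lambda>bs. P (False # bs))"

declare word_prob.simps(2) [simp del]

lemma word_prob_1 [simp]:
  "word_prob p (Suc 0) P = (if P [True] then p else 0) + (if P [False] then 1 - p else 0)"
  by (simp add: word_prob.simps(2))

lemma word_prob_cong:
  "(\<And>bs. length bs = n \<Longrightarrow> P bs = Q bs) \<Longrightarrow> word_prob p n P = word_prob p n Q"
proof (induction n arbitrary: P Q)
  case (Suc n)
  have "word_prob p n (\<lambda>bs. P (b # bs)) = word_prob p n (\<lambda>bs. Q (b # bs))" for b
    by (rule Suc.IH) (simp add: Suc.prems)
  then show ?case by (simp add: word_prob.simps(2))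
qed simp

lemma word_prob_True [simp]: "word_prob p n (\<lambda>_. True) = 1"
  by (induction n) (simp_all add: word_prob.simps(2))

lemma word_prob_False [simp]: "word_prob p n (\<lambda>_. False) = 0"
  by (induction n) (simp_all add: word_prob.simps(2))

lemma word_prob_append:
  assumes "\<And>xs ys. length xs = n \<Longrightarrow> length ys = m \<Longrightarrow> F (xs @ ys) \<longleftrightarrow> P xs \<and> Q ys"
  shows "word_prob p (n + m) F = word_prob p n P * word_prob p m Q"
  using assms
proof (induction n arbitrary: F P)
  case 0
  then have "word_prob p m F = word_prob p m (\<lambda>ys. P [] \<and> Q ys)"
    by (intro word_prob_cong) simp
  then show ?case by (cases "P []") simp_all
next
  case (Suc n)
  have "word_prob p (n + m) (\<lambda>zs. F (b # zs)) = word_prob p n (\<lambda>xs. P (b # xs)) * word_prob p m Q"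
    for b
  proof (rule Suc.IH)
    fix xs ys :: "bool list"
    assume "length xs = n" "length ys = m"
    then show "F (b # xs @ ys) \<longleftrightarrow> P (b # xs) \<and> Q ys" using Suc.prems[of "b # xs" ys] by simp
  qed
  then show ?case by (simp add: word_prob.simps(2) algebra_simps)
qed

lemma word_prob_conj_add:
  "word_prob p n (\<lambda>bs. P bs \<and> Q bs) + word_prob p n (\<lambda>bs. P bs \<and> \<not> Q bs) = word_prob p n P"
proof (induction n arbitrary: P Q)
  case (Suc n)
  note split_True = Suc.IH[of "\<lambda>bs. P (True # bs)" "\<lambda>bs. Q (True # bs)"]
  note split_False = Suc.IH[of "\<lambda>bs. P (False # bs)" "\<lambda>bs. Q (False # bs)"]
  show ?case
    by (simp only: word_prob.simps(2) flip: split_True split_False) (simp add: algebra_simps)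
qed simp

lemma word_prob_mono:
  assumes "0 \<le> p" "p \<le> 1" and "\<And>bs. length bs = n \<Longrightarrow> P bs \<Longrightarrow> Q bs"
  shows "word_prob p n P \<le> word_prob p n Q"
  using assms(3)
proof (induction n arbitrary: P Q)
  case (Suc n)
  have "word_prob p n (\<lambda>bs. P (b # bs)) \<le> word_prob p n (\<lambda>bs. Q (b # bs))" for b
    by (rule Suc.IH) (simp add: Suc.prems)
  then show ?case using assms(1,2) by (simp add: word_prob.simps(2) add_mono mult_left_mono)
qed simp

lemma word_weight_nonneg: "0 \<le> p \<Longrightarrow> p \<le> 1 \<Longrightarrow> 0 \<le> word_weight p bs"
  by (induction bs) (simp_all add: word_weight_def)

lemma word_weight_eq_prod: "word_weight p bs = (\<Prod>q<length bs. if bs ! q then p else 1 - p)"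
  by (induction bs) (simp_all add: word_weight_def prod.lessThan_Suc_shift del: prod.lessThan_Suc)

lemma finite_bool_lists_length: "finite {bs :: bool list. length bs = n \<and> P bs}"
  by (rule finite_subset[OF _ finite_lists_length_eq[of UNIV n]]) auto

lemma word_prob_eq_sum: "word_prob p n P = (\<Sum>bs | length bs = n \<and> P bs. word_weight p bs)"
proof (induction n arbitrary: P)
  case 0
  have "{bs. length bs = 0 \<and> P bs} = (if P [] then {[]} else {})" by auto
  then show ?case by (simp add: word_weight_def)
next
  case (Suc n)
  define S where "S b = {bs. length bs = n \<and> P (b # bs)}" for b
  have fin: "finite (S b)" for b
    unfolding S_def by (rule finite_bool_lists_length)
  have split: "{bs. length bs = Suc n \<and> P bs} = Cons True ` S True \<union> Cons False ` S False"
  proof (intro set_eqI iffI)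
    fix bs assume "bs \<in> {bs. length bs = Suc n \<and> P bs}"
    then obtain b cs where "bs = b # cs" "cs \<in> S b" by (auto simp: S_def length_Suc_conv)
    then show "bs \<in> Cons True ` S True \<union> Cons False ` S False" by (cases b) auto
  qed (auto simp: S_def)
  have "(\<Sum>bs\<in>Cons b ` S b. word_weight p bs) = (if b then p else 1 - p) * word_prob p n (\<lambda>bs. P (b # bs))"
    for b by (simp add: sum.reindex Suc.IH S_def sum_distrib_left word_weight_def)
  then show ?case
    unfolding split by (subst sum.union_disjoint) (auto simp: fin word_prob.simps(2))
qed

section \<open>Thinning of finite words\<close>

lemma all_less_add_iff: "(\<forall>j < a + b. P j) \<longleftrightarrow> (\<forall>j<a. P j) \<and> (\<forall>i<b. P (a + i))" for a b :: nat
  by (induction b) (auto simp: All_less_Suc)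

definition thin :: "(nat \<Rightarrow> bool) \<Rightarrow> nat \<Rightarrow> bool" where
  "thin f q \<longleftrightarrow> f q \<and> (f (q - 1) \<or> f (Suc q))"

definition no_adjacent_ones :: "bool list \<Rightarrow> bool" where
  "no_adjacent_ones bs \<longleftrightarrow> (\<forall>j. Suc j < length bs \<longrightarrow> \<not> (bs ! j \<and> bs ! Suc j))"

definition occupied_thinned :: "bool list \<Rightarrow> bool list \<Rightarrow> bool" where
  "occupied_thinned w bs \<longleftrightarrow> bs ! 0 \<and> (\<forall>j<length w. thin (nth bs) (Suc j) = w ! j)"

text \<open>Thinning the sites \<open>1, \<dots>, length w\<close> involves the sites \<open>0, \<dots>, length w + 1\<close>.\<close>

definition occupied_thinned_prob :: "real \<Rightarrow> bool list \<Rightarrow> real" where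
  "occupied_thinned_prob p w = word_prob p (length w + 2) (occupied_thinned w)"

definition pair_free_prob :: "real \<Rightarrow> nat \<Rightarrow> real" where
  "pair_free_prob p m = word_prob p (Suc m) (\<lambda>bs. bs ! 0 \<and> no_adjacent_ones bs)"

definition pair_free_empty_end_prob :: "real \<Rightarrow> nat \<Rightarrow> real" where
  "pair_free_empty_end_prob p m =
     word_prob p (Suc m) (\<lambda>bs. bs ! 0 \<and> no_adjacent_ones bs \<and> \<not> bs ! m)"

lemma thin_nth_append:
  "1 \<le> q \<Longrightarrow> thin (nth (xs @ ys)) (length xs + q) = thin (nth ys) q"
  by (cases q) (simp_all add: thin_def nth_append)

lemma thin_nth_Cons: "1 \<le> q \<Longrightarrow> thin (nth (b # ys)) (Suc q) = thin (nth ys) q"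
  using thin_nth_append[of q "[b]" ys] by simp

lemma no_thin_iff_no_adjacent:
  assumes "1 \<le> r"
  shows "(\<forall>j<r. \<not> thin f (Suc j)) \<longleftrightarrow> (\<forall>j<Suc r. \<not> (f j \<and> f (Suc j)))"
proof
  assume none: "\<forall>j<r. \<not> thin f (Suc j)"
  show "\<forall>j<Suc r. \<not> (f j \<and> f (Suc j))"
  proof (intro allI impI)
    fix j assume "j < Suc r"
    then consider "j < r" | "j = r" by linarith
    then show "\<not> (f j \<and> f (Suc j))"
    proof cases
      case 1 then show ?thesis using none by (auto simp: thin_def)
    next
      case 2 then show ?thesis using none[rule_format, of "r - 1"] assms by (auto simp: thin_def)
    qed
  qed
next
  assume none: "\<forall>j<Suc r. \<not> (f j \<and> f (Suc j))"
  show "\<forall>j<r. \<not> thin f (Suc j)"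
  proof (intro allI impI)
    fix j assume "j < r"
    then show "\<not> thin f (Suc j)"
      using none[rule_format, of j] none[rule_format, of "Suc j"] by (auto simp: thin_def)
  qed
qed

lemma first_thin_iff:
  assumes "1 \<le> r"
  shows "(\<forall>j<r. \<not> thin f (Suc j)) \<and> thin f (Suc r) \<longleftrightarrow>
         (\<forall>j<r. \<not> (f j \<and> f (Suc j))) \<and> \<not> f r \<and> f (Suc r) \<and> f (Suc (Suc r))"
  using no_thin_iff_no_adjacent[OF assms, of f] by (auto simp: thin_def less_Suc_eq)

lemma no_adjacent_ones_iff:
  "length bs = Suc n \<Longrightarrow> no_adjacent_ones bs \<longleftrightarrow> (\<forall>j<n. \<not> (bs ! j \<and> bs ! Suc j))"
  by (auto simp: no_adjacent_ones_def)

lemma no_adjacent_ones_snoc: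
  "length xs = Suc m \<Longrightarrow> no_adjacent_ones (xs @ [c]) \<longleftrightarrow> no_adjacent_ones xs \<and> \<not> (xs ! m \<and> c)"
  by (auto simp: no_adjacent_ones_def nth_append less_Suc_eq)

lemma occupied_thinned_Cons_True:
  "occupied_thinned (True # w) (b # ys) \<longleftrightarrow> b \<and> occupied_thinned w ys"
  unfolding occupied_thinned_def
  by (auto simp: All_less_Suc2 thin_nth_Cons) (auto simp: thin_def)

lemma occupied_thinned_prob_Nil: "occupied_thinned_prob p [] = p"
  by (simp add: occupied_thinned_prob_def occupied_thinned_def numeral_2_eq_2 word_prob.simps(2))

lemma occupied_thinned_prob_Cons_True:
  "occupied_thinned_prob p (True # w) = p * occupied_thinned_prob p w"
proof -
  have "occupied_thinned_prob p (True # w) = word_prob p (1 + (length w + 2)) (occupied_thinned (True # w))"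
    by (simp add: occupied_thinned_prob_def)
  also have "\<dots> = word_prob p 1 (\<lambda>xs. xs ! 0) * word_prob p (length w + 2) (occupied_thinned w)"
    by (rule word_prob_append) (auto simp: length_Suc_conv occupied_thinned_Cons_True)
  finally show ?thesis by (simp add: occupied_thinned_prob_def)
qed

lemma occupied_thinned_prob_zeros:
  assumes "1 \<le> r"
  shows "occupied_thinned_prob p (replicate r False) = pair_free_prob p (Suc r)"
  unfolding occupied_thinned_prob_def pair_free_prob_def length_replicate add_2_eq_Suc'
proof (rule word_prob_cong)
  fix bs :: "bool list" assume "length bs = Suc (Suc r)"
  then show "occupied_thinned (replicate r False) bs \<longleftrightarrow> bs ! 0 \<and> no_adjacent_ones bs"
    using no_thin_iff_no_adjacent[OF assms, of "nth bs"]
    by (simp add: occupied_thinned_def no_adjacent_ones_iff)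
qed

lemma pair_free_prob_0: "pair_free_prob p 0 = p"
  by (simp add: pair_free_prob_def no_adjacent_ones_def word_prob.simps(2))

lemma pair_free_empty_end_prob_0: "pair_free_empty_end_prob p 0 = 0"
  by (simp add: pair_free_empty_end_prob_def word_prob.simps(2))

lemma pair_free_empty_end_prob_Suc:
  "pair_free_empty_end_prob p (Suc m) = (1 - p) * pair_free_prob p m"
proof -
  have "pair_free_empty_end_prob p (Suc m) =
      word_prob p (Suc m + 1) (\<lambda>bs. bs ! 0 \<and> no_adjacent_ones bs \<and> \<not> bs ! Suc m)"
    by (simp add: pair_free_empty_end_prob_def)
  also have "\<dots> = word_prob p (Suc m) (\<lambda>bs. bs ! 0 \<and> no_adjacent_ones bs) * word_prob p 1 (\<lambda>bs. \<not> bs ! 0)"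
  proof (rule word_prob_append)
    fix xs ys :: "bool list"
    assume xs: "length xs = Suc m" and "length ys = 1"
    then obtain c where "ys = [c]" by (auto simp: length_Suc_conv)
    then show "(xs @ ys) ! 0 \<and> no_adjacent_ones (xs @ ys) \<and> \<not> (xs @ ys) ! Suc m \<longleftrightarrow>
        (xs ! 0 \<and> no_adjacent_ones xs) \<and> \<not> ys ! 0"
      using xs by (auto simp: nth_append no_adjacent_ones_snoc)
  qed
  finally show ?thesis by (simp add: pair_free_prob_def)
qed

lemma pair_free_prob_Suc:
  "pair_free_prob p (Suc m) = pair_free_empty_end_prob p (Suc m) + p * pair_free_empty_end_prob p m"
proof -
  let ?P = "\<lambda>bs. bs ! 0 \<and> no_adjacent_ones bs"
  have "word_prob p (Suc m + 1) (\<lambda>bs. ?P bs \<and> bs ! Suc m) =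
      word_prob p (Suc m) (\<lambda>bs. ?P bs \<and> \<not> bs ! m) * word_prob p 1 (\<lambda>bs. bs ! 0)"
  proof (rule word_prob_append)
    fix xs ys :: "bool list"
    assume xs: "length xs = Suc m" and "length ys = 1"
    then obtain c where "ys = [c]" by (auto simp: length_Suc_conv)
    then show "?P (xs @ ys) \<and> (xs @ ys) ! Suc m \<longleftrightarrow> (?P xs \<and> \<not> xs ! m) \<and> ys ! 0"
      using xs by (auto simp: nth_append no_adjacent_ones_snoc)
  qed
  moreover have "word_prob p (Suc (Suc m)) (\<lambda>bs. ?P bs \<and> bs ! Suc m) +
      word_prob p (Suc (Suc m)) (\<lambda>bs. ?P bs \<and> \<not> bs ! Suc m) = pair_free_prob p (Suc m)"
    unfolding pair_free_prob_def by (rule word_prob_conj_add)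
  ultimately show ?thesis
    by (simp add: pair_free_empty_end_prob_def conj_assoc mult.commute)
qed

lemma pair_free_prob_rec:
  "pair_free_prob p (Suc (Suc m)) = (1 - p) * pair_free_prob p (Suc m) + p * (1 - p) * pair_free_prob p m"
  using pair_free_prob_Suc[of p "Suc m"] by (simp add: pair_free_empty_end_prob_Suc)

lemma pair_free_prob_1: "pair_free_prob p 1 = p * (1 - p)"
  using pair_free_prob_Suc[of p 0]
  by (simp add: pair_free_empty_end_prob_Suc pair_free_empty_end_prob_0 pair_free_prob_0)

lemma pair_free_prob_2: "pair_free_prob p 2 = p * (1 - p)"
proof -
  have "pair_free_prob p 2 = (1 - p) * (p * (1 - p)) + p * (1 - p) * p"
    using pair_free_prob_rec[of p 0] pair_free_prob_1
    by (simp add: numeral_2_eq_2 pair_free_prob_0)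
  then show ?thesis by algebra
qed

lemma pair_free_empty_end_prob_eq:
  "p * p * pair_free_empty_end_prob p r = pair_free_prob p (Suc r) - pair_free_prob p (Suc (Suc r))"
proof -
  have "p * p * pair_free_empty_end_prob p r =
      p * (pair_free_prob p (Suc r) - pair_free_empty_end_prob p (Suc r))"
    using pair_free_prob_Suc[of p r] by (simp add: mult.assoc)
  also have "\<dots> = pair_free_prob p (Suc r) - pair_free_prob p (Suc (Suc r))"
    using pair_free_prob_Suc[of p "Suc r"] by (simp add: pair_free_empty_end_prob_Suc algebra_simps)
  finally show ?thesis .
qed

lemma pair_free_prob_Suc_le:
  assumes "0 \<le> p" "p \<le> 1"
  shows "pair_free_prob p (Suc n) \<le> pair_free_prob p n"
proof -
  let ?P = "\<lambda>bs. bs ! 0 \<and> no_adjacent_ones bs"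
  have "pair_free_prob p (Suc n) = word_prob p (Suc n + 1) ?P"
    by (simp add: pair_free_prob_def)
  also have "\<dots> \<le> word_prob p (Suc n + 1) (\<lambda>bs. ?P (take (Suc n) bs))"
    by (rule word_prob_mono[OF assms]) (auto simp: no_adjacent_ones_def)
  also have "\<dots> = pair_free_prob p n * word_prob p 1 (\<lambda>_. True)"
    unfolding pair_free_prob_def by (rule word_prob_append) simp
  finally show ?thesis by simp
qed

lemma occupied_thinned_zeros_True:
  assumes r: "1 \<le> r" and xs: "length xs = Suc r"
  shows "occupied_thinned (replicate r False @ True # v) (xs @ c # ys) \<longleftrightarrow>
         (xs ! 0 \<and> no_adjacent_ones xs \<and> \<not> xs ! r) \<and> (occupied_thinned v (c # ys) \<and> ys ! 0)"
proof -
  let ?f = "nth (xs @ c # ys)"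
  have low: "?f j = xs ! j" if "j \<le> r" for j using that xs by (simp add: nth_append)
  have high: "?f (Suc r) = c" "?f (Suc (Suc r)) = ys ! 0" using xs by (simp_all add: nth_append)
  have tail: "thin ?f (Suc (Suc (r + i))) = thin (nth (c # ys)) (Suc i)" for i
    using thin_nth_append[of "Suc i" xs "c # ys"] xs by simp
  have "occupied_thinned (replicate r False @ True # v) (xs @ c # ys) \<longleftrightarrow>
      ?f 0 \<and> ((\<forall>j<r. \<not> thin ?f (Suc j)) \<and> thin ?f (Suc r)) \<and>
      (\<forall>i<length v. thin (nth (c # ys)) (Suc i) = v ! i)"
    unfolding occupied_thinned_def length_append length_replicate all_less_add_iff
    by (simp add: nth_append All_less_Suc2 tail)
  also have "\<dots> \<longleftrightarrow> ?f 0 \<and> ((\<forall>j<r. \<not> (?f j \<and> ?f (Suc j))) \<and> \<not> ?f r \<and> ?f (Suc r) \<and> ?f (Suc (Suc r))) \<and>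
      (\<forall>i<length v. thin (nth (c # ys)) (Suc i) = v ! i)"
    using first_thin_iff[OF r, of ?f] by simp
  also have "\<dots> \<longleftrightarrow> (xs ! 0 \<and> no_adjacent_ones xs \<and> \<not> xs ! r) \<and> (occupied_thinned v (c # ys) \<and> ys ! 0)"
    using low high xs by (auto simp: no_adjacent_ones_iff occupied_thinned_def)
  finally show ?thesis .
qed

lemma occupied_thinned_prob_zeros_True:
  assumes "1 \<le> r"
  shows "occupied_thinned_prob p (replicate r False @ True # v) =
    pair_free_empty_end_prob p r * word_prob p (length v + 2) (\<lambda>u. occupied_thinned v u \<and> u ! 1)"
proof -
  have "occupied_thinned_prob p (replicate r False @ True # v) =
      word_prob p (Suc r + (length v + 2)) (occupied_thinned (replicate r False @ True # v))"
    by (simp add: occupied_thinned_prob_def)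
  also have "\<dots> = pair_free_empty_end_prob p r * word_prob p (length v + 2) (\<lambda>u. occupied_thinned v u \<and> u ! 1)"
    unfolding pair_free_empty_end_prob_def
  proof (rule word_prob_append)
    fix xs us :: "bool list"
    assume "length xs = Suc r" "length us = length v + 2"
    moreover obtain c ys where "us = c # ys" using \<open>length us = _\<close> by (cases us) auto
    ultimately show "occupied_thinned (replicate r False @ True # v) (xs @ us) \<longleftrightarrow>
        (xs ! 0 \<and> no_adjacent_ones xs \<and> \<not> xs ! r) \<and> (occupied_thinned v us \<and> us ! 1)"
      using occupied_thinned_zeros_True[OF assms] by simp
  qed
  finally show ?thesis .
qed

lemma occupied_pair_thinned_prob:
  "word_prob p (length v + 2) (\<lambda>u. occupied_thinned v u \<and> u ! 1) =
     (if v = [] then p * p else if hd v then occupied_thinned_prob p v else 0)"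
proof (cases v)
  case Nil
  then show ?thesis by (simp add: occupied_thinned_def numeral_2_eq_2 word_prob.simps(2))
next
  case (Cons b v')
  then have "word_prob p (length v + 2) (\<lambda>u. occupied_thinned v u \<and> u ! 1) =
      word_prob p (length v + 2) (\<lambda>u. occupied_thinned v u \<and> b)"
    by (intro word_prob_cong) (auto simp: occupied_thinned_def thin_def)
  then show ?thesis using Cons by (cases b) (simp_all add: occupied_thinned_prob_def)
qed

section \<open>The GHoC chain along a word\<close>

text \<open>The state reached from \<open>s\<close> when the next site of the thinned field is \<open>b\<close>: since
  occupied sites come in runs of length at least two, state 0 marks the first site of a run,
  state 1 a later site of a run, and \<open>n \<ge> 2\<close> a site \<open>n - 1\<close> sites after the end of a run.\<close>

definition next_state :: "enat \<Rightarrow> bool \<Rightarrow> enat" where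
  "next_state s b = (if b then (if s \<le> 1 then 1 else 0) else (if s \<le> 1 then 2 else s + 1))"

text \<open>A transition \<open>s \<rightarrow> t\<close> of positive probability has \<open>t = next_state s (tau t)\<close>
  (\<open>Pi_p_nonzero_imp\<close>), so the path of the chain is determined by the \<open>\<tau>\<close>-word it emits.\<close>

primrec emission_prob :: "real \<Rightarrow> enat \<Rightarrow> bool list \<Rightarrow> real" where
  "emission_prob p s [] = 1"
| "emission_prob p s (b # w) = Pi_p p s (next_state s b) * emission_prob p (next_state s b) w"

lemma emission_prob_append:
  "emission_prob p s (u @ v) = emission_prob p s u * emission_prob p (foldl next_state s u) v"
  by (induction u arbitrary: s) simp_all

lemma next_state_False_enat: "next_state (enat (Suc n)) False = enat (Suc (Suc n))"
  by (cases n) (simp_all add: next_state_def one_enat_def numeral_eq_enat)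

lemma foldl_next_state_zeros: "foldl next_state 1 (replicate k False) = enat (Suc k)"
proof -
  have "foldl next_state (enat (Suc n)) (replicate k False) = enat (Suc n + k)" for n
    by (induction k arbitrary: n) (simp_all add: next_state_False_enat)
  from this[of 0] show ?thesis by (simp add: one_enat_def)
qed

lemma emission_prob_zeros_Suc:
  "emission_prob p 1 (replicate (Suc k) False) =
     emission_prob p 1 (replicate k False) * Pi_p p (enat (Suc k)) (enat (Suc (Suc k)))"
  unfolding replicate_Suc replicate_append_same[symmetric] emission_prob_append foldl_next_state_zeros
  by (simp add: next_state_False_enat)

lemma next_state_True_enat: "2 \<le> n \<Longrightarrow> next_state (enat n) True = 0"
  by (simp add: next_state_def one_enat_def)

lemma Pi_p_enat_Suc: "2 \<le> n \<Longrightarrow> Pi_p p (enat n) (enat (Suc n)) = g_p p (enat n)"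
  by (simp add: Pi_p_def one_enat_def zero_enat_def)

lemma Pi_p_enat_0: "2 \<le> n \<Longrightarrow> Pi_p p (enat n) 0 = 1 - g_p p (enat n)"
  by (simp add: Pi_p_def one_enat_def zero_enat_def)

lemma emission_prob_0:
  "emission_prob p 0 v = (if v = [] then 1 else if hd v then emission_prob p 1 (tl v) else 0)"
  by (cases v) (simp_all add: next_state_def Pi_p_def)

lemma emission_prob_1_Cons_True: "emission_prob p 1 (True # w) = p * emission_prob p 1 w"
  by (simp add: next_state_def Pi_p_def)

section \<open>The closed form of \<open>g_p\<close>\<close>

text \<open>\<open>lam_PF p\<close> and \<open>lam_r p\<close> are the roots of \<open>\<lambda>\<^sup>2 = (1 - p) \<lambda> + p (1 - p)\<close>, the
  characteristic equation of \<open>pair_free_prob_rec\<close>.\<close>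

definition binet :: "real \<Rightarrow> nat \<Rightarrow> real" where
  "binet p m = lam_PF p ^ m / (1 - lam_PF p) - lam_r p ^ m / (1 - lam_r p)"

locale ghoc_parameter =
  fixes p :: real
  assumes p_pos: "0 < p" and p_less_1: "p < 1"
begin

lemma lam_bounds: "0 < lam_PF p" "lam_PF p < 1" "-1 < lam_r p" "lam_r p < 0" "- lam_r p < lam_PF p"
proof -
  define d where "d = sqrt ((1 - p) * (3 * p + 1))"
  have "(1 - p) * (1 - p) < (1 - p) * (3 * p + 1)"
    using p_pos p_less_1 by (intro mult_strict_left_mono) auto
  then have lower: "1 - p < d"
    unfolding d_def by (intro real_less_rsqrt) (simp add: power2_eq_square)
  have "(1 - p) * (3 * p + 1) < (1 + p) * (1 + p)"
    using p_pos by (simp add: algebra_simps)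
  then have upper: "d < 1 + p"
    unfolding d_def using p_pos by (intro real_less_lsqrt) (simp_all add: power2_eq_square)
  have "lam_PF p = (1 - p + d) / 2" "lam_r p = (1 - p - d) / 2"
    by (simp_all add: lam_PF_def lam_r_def d_def)
  then show "0 < lam_PF p" "lam_PF p < 1" "-1 < lam_r p" "lam_r p < 0" "- lam_r p < lam_PF p"
    using lower upper p_less_1 by auto
qed

lemma lam_char_eq:
  assumes "x = lam_PF p \<or> x = lam_r p"
  shows "x ^ 2 = (1 - p) * x + p * (1 - p)"
proof -
  define d where "d = sqrt ((1 - p) * (3 * p + 1))"
  have d: "d * d = (1 - p) * (3 * p + 1)"
    unfolding d_def using p_pos p_less_1 by simp
  have "2 * x - (1 - p) = d \<or> 2 * x - (1 - p) = - d"
    using assms by (auto simp: lam_PF_def lam_r_def d_def)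
  then have "(2 * x - (1 - p)) * (2 * x - (1 - p)) = d * d" by auto
  moreover have "4 * (x ^ 2 - (1 - p) * x - p * (1 - p)) = (2 * x - (1 - p)) * (2 * x - (1 - p)) - d * d"
    using d by (simp add: power2_eq_square algebra_simps)
  ultimately show ?thesis by simp
qed

lemma binet_rec: "binet p (Suc (Suc m)) = (1 - p) * binet p (Suc m) + p * (1 - p) * binet p m"
proof -
  have "x ^ Suc (Suc m) = (1 - p) * x ^ Suc m + p * (1 - p) * x ^ m"
    if "x = lam_PF p \<or> x = lam_r p" for x
  proof -
    have "x ^ Suc (Suc m) = x ^ m * x ^ 2" by (simp add: power2_eq_square)
    also have "\<dots> = x ^ m * ((1 - p) * x + p * (1 - p))" using lam_char_eq[OF that] by simp
    finally show ?thesis by (simp add: algebra_simps)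
  qed
  note rec = this[OF disjI1[OF refl]] this[OF disjI2[OF refl]]
  have lin: "(a * A + b * B) / d1 - (a * C + b * D) / d2 = a * (A / d1 - C / d2) + b * (B / d1 - D / d2)"
    for a b A B C D d1 d2 :: real
    by (simp add: add_divide_distrib right_diff_distrib)
  show ?thesis by (simp only: binet_def rec lin)
qed

lemma binet_pos: "0 < binet p m"
proof -
  note lam = lam_bounds
  have "lam_r p ^ m / (1 - lam_r p) \<le> \<bar>lam_r p\<bar> ^ m / (1 - lam_r p)"
    using lam by (intro divide_right_mono) (metis abs_ge_self power_abs, simp)
  also have "\<dots> \<le> \<bar>lam_r p\<bar> ^ m / 1"
    using lam by (intro divide_left_mono) auto
  also have "\<dots> \<le> lam_PF p ^ m"
    using lam by (simp add: power_mono)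
  also have "\<dots> < lam_PF p ^ m / (1 - lam_PF p)"
    using lam by (simp add: less_divide_eq)
  finally show ?thesis by (simp add: binet_def)
qed

lemma binet_1: "binet p 1 = binet p 0"
proof -
  have "x / (1 - x) = 1 / (1 - x) - 1" if "x < 1" for x :: real
    using that by (simp add: field_simps)
  then show ?thesis using lam_bounds by (simp add: binet_def)
qed

lemma g_p_eq_binet_ratio:
  assumes "2 \<le> n"
  shows "g_p p (enat n) = binet p n / binet p (n - 1)"
proof -
  define L R where "L = lam_PF p" and "R = lam_r p"
  define X where "X m = 1 / (1 - L) - (R / L) ^ m / (1 - R)" for m
  obtain k where n: "n = Suc k" using assms by (cases n) auto
  have L: "0 < L" "L < 1" and R: "R < 0" using lam_bounds by (auto simp: L_def R_def)
  have binet_X: "binet p m = L ^ m * X m" for m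
  proof -
    have "L ^ m * (R / L) ^ m = R ^ m" using L by (simp add: power_divide)
    then show ?thesis by (simp add: binet_def X_def L_def R_def right_diff_distrib)
  qed
  have abs_a: "\<bar>a_ratio p\<bar> = - (R / L)"
    using L R by (simp add: a_ratio_def L_def R_def abs_if divide_neg_pos)
  have sign: "(-1) ^ Suc j * (- x) ^ j = - (x ^ j)" for j and x :: real
    by (induction j) (simp_all add: algebra_simps)
  have s1: "(-1) ^ (n + 1) * \<bar>a_ratio p\<bar> ^ n = - ((R / L) ^ n)"
    using sign[of n] by (simp add: abs_a)
  have s2: "(-1) ^ n * \<bar>a_ratio p\<bar> ^ (n - 1) = - ((R / L) ^ k)"
    using sign[of k] by (simp add: abs_a n)
  have "g_p p (enat n) =
      (- ((R / L) ^ n) * (L / (1 - R)) + L / (1 - L)) / (- ((R / L) ^ k) * (1 / (1 - R)) + 1 / (1 - L))"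
    using assms s1 s2 by (simp add: g_p_def L_def R_def)
  also have "\<dots> = L * X n / X k"
    by (simp add: X_def algebra_simps)
  also have "\<dots> = (L ^ k * (L * X n)) / (L ^ k * X k)"
    using L by simp
  also have "\<dots> = binet p n / binet p (n - 1)"
    by (simp add: binet_X n ac_simps)
  finally show ?thesis .
qed

lemma pair_free_prob_Suc_eq_binet:
  "pair_free_prob p (Suc m) = p * (1 - p) / binet p 0 * binet p m"
proof (induction m rule: less_induct)
  case (less m)
  define c where "c = p * (1 - p) / binet p 0"
  have b0: "binet p 0 \<noteq> 0" using binet_pos[of 0] by simp
  show ?case
  proof (cases m)
    case 0
    then show ?thesis using b0 pair_free_prob_1 by simp
  next
    case (Suc k)
    show ?thesis
    proof (cases k)
      case 0
      then show ?thesis using Suc b0 binet_1 pair_free_prob_2 by (simp add: numeral_2_eq_2)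
    next
      case (Suc j)
      then have m: "m = Suc (Suc j)" using \<open>m = Suc k\<close> by simp
      have "pair_free_prob p (Suc m) =
          (1 - p) * pair_free_prob p (Suc (Suc j)) + p * (1 - p) * pair_free_prob p (Suc j)"
        using pair_free_prob_rec[of p "Suc j"] m by simp
      also have "\<dots> = c * ((1 - p) * binet p (Suc j) + p * (1 - p) * binet p j)"
        using less.IH[of "Suc j", folded c_def] less.IH[of j, folded c_def] m by (simp add: algebra_simps)
      also have "\<dots> = c * binet p m"
        using binet_rec[of j] m by simp
      finally show ?thesis by (simp add: c_def)
    qed
  qed
qed

lemma pair_free_prob_pos: "0 < pair_free_prob p m"
proof (cases m)
  case 0
  then show ?thesis using p_pos by (simp add: pair_free_prob_0)
next
  case (Suc k)
  then show ?thesis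
    using p_pos p_less_1 binet_pos[of 0] binet_pos[of k] by (simp add: pair_free_prob_Suc_eq_binet)
qed

lemma g_p_eq_pair_free_ratio:
  assumes "2 \<le> n"
  shows "g_p p (enat n) = pair_free_prob p (Suc n) / pair_free_prob p n"
proof -
  obtain k where n: "n = Suc k" using assms by (cases n) auto
  have "p * (1 - p) / binet p 0 \<noteq> 0" using p_pos p_less_1 binet_pos[of 0] by simp
  then show ?thesis
    using assms by (simp add: g_p_eq_binet_ratio pair_free_prob_Suc_eq_binet n)
qed

lemma g_p_bounds: "s \<noteq> 0 \<Longrightarrow> s \<noteq> 1 \<Longrightarrow> 0 \<le> g_p p s \<and> g_p p s \<le> 1"
proof (cases s)
  case (enat n)
  assume "s \<noteq> 0" "s \<noteq> 1"
  then have n: "2 \<le> n" using enat by (auto simp: zero_enat_def one_enat_def)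
  show ?thesis
    using g_p_eq_pair_free_ratio[OF n] pair_free_prob_pos[of n] pair_free_prob_pos[of "Suc n"]
      pair_free_prob_Suc_le[of p n] p_pos p_less_1 enat
    by simp
next
  case infinity
  then show ?thesis using lam_bounds by (simp add: g_p_def)
qed

lemma Pi_p_nonneg: "0 \<le> Pi_p p s t"
  using p_pos p_less_1 g_p_bounds[of s] by (auto simp: Pi_p_def)

section \<open>Thinned Bernoulli words as emissions of the chain\<close>

lemma emission_prob_zeros:
  assumes "1 \<le> r"
  shows "p * emission_prob p 1 (replicate r False) = pair_free_prob p (Suc r)"
  using assms
proof (induction r rule: nat_induct_at_least)
  case base
  then show ?case using pair_free_prob_2 by (simp add: next_state_def Pi_p_def numeral_2_eq_2)
next
  case (Suc r)
  have "p * emission_prob p 1 (replicate (Suc r) False) =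
      p * emission_prob p 1 (replicate r False) * g_p p (enat (Suc r))"
    using Suc.hyps emission_prob_zeros_Suc[of p r] Pi_p_enat_Suc[of "Suc r" p] by simp
  also have "\<dots> = pair_free_prob p (Suc (Suc r))"
    using Suc.IH Suc.hyps pair_free_prob_pos[of "Suc r"] by (simp add: g_p_eq_pair_free_ratio)
  finally show ?case .
qed

lemma emission_prob_zeros_True:
  assumes "1 \<le> r"
  shows "p * emission_prob p 1 (replicate r False @ True # v) =
         p * p * pair_free_empty_end_prob p r * emission_prob p 0 v"
proof -
  have "p * emission_prob p 1 (replicate r False @ True # v) =
      pair_free_prob p (Suc r) * (1 - g_p p (enat (Suc r))) * emission_prob p 0 v"
    using assms emission_prob_zeros[OF assms]
    by (simp add: emission_prob_append foldl_next_state_zeros next_state_True_enat Pi_p_enat_0)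
  also have "\<dots> = (pair_free_prob p (Suc r) - pair_free_prob p (Suc (Suc r))) * emission_prob p 0 v"
    using assms pair_free_prob_pos[of "Suc r"] by (simp add: g_p_eq_pair_free_ratio field_simps)
  finally show ?thesis by (simp add: pair_free_empty_end_prob_eq)
qed

lemma occupied_pair_thinned_prob_eq_emission:
  assumes "occupied_thinned_prob p v = p * emission_prob p 1 v"
  shows "word_prob p (length v + 2) (\<lambda>u. occupied_thinned v u \<and> u ! 1) = p * p * emission_prob p 0 v"
  unfolding occupied_pair_thinned_prob using assms
  by (cases v) (auto simp: emission_prob_0 emission_prob_1_Cons_True simp del: emission_prob.simps)

lemma occupied_thinned_prob_eq_emission: "occupied_thinned_prob p w = p * emission_prob p 1 w"
proof (induction "length w" arbitrary: w rule: less_induct)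
  case less
  define r where "r = length (takeWhile Not w)"
  define v where "v = dropWhile Not w"
  have "takeWhile Not w = replicate r False"
    unfolding r_def by (rule replicate_length_same[symmetric]) (auto dest: set_takeWhileD)
  then have w: "w = replicate r False @ v"
    using takeWhile_dropWhile_id[of Not w] by (simp add: v_def)
  have "v = [] \<or> hd v" using hd_dropWhile[of Not w] by (auto simp: v_def)
  then consider (empty) "r = 0" "v = []" | (occupied) v' where "r = 0" "v = True # v'"
    | (zeros) "1 \<le> r" "v = []" | (gap) v' where "1 \<le> r" "v = True # v'"
    by (cases v) force+
  then show ?case
  proof cases
    case empty
    then show ?thesis using w by (simp add: occupied_thinned_prob_Nil)
  next
    case (occupied v')
    then show ?thesis
      using w less[of v']
      by (simp add: occupied_thinned_prob_Cons_True emission_prob_1_Cons_True del: emission_prob.simps)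
  next
    case zeros
    then show ?thesis using w occupied_thinned_prob_zeros emission_prob_zeros by simp
  next
    case (gap v')
    then have w': "w = replicate r False @ True # v'" using w by simp
    have adjacent:
      "word_prob p (length v' + 2) (\<lambda>u. occupied_thinned v' u \<and> u ! 1) = p * p * emission_prob p 0 v'"
      using less[of v'] w' by (intro occupied_pair_thinned_prob_eq_emission) simp
    show ?thesis
      unfolding w' occupied_thinned_prob_zeros_True[OF gap(1)] adjacent emission_prob_zeros_True[OF gap(1)]
      by (simp add: ac_simps)
  qed
qed

end

lemma space_Omega_M [simp]: "space Omega_M = UNIV"
  by (simp add: Omega_M_def space_PiM)

lemma space_mu_p [simp]: "space (mu_p p) = UNIV"
  by (simp add: mu_p_def space_PiM)

lemma space_S_path_M [simp]: "space S_path_M = UNIV"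
  by (simp add: S_path_M_def space_PiM)

lemma sets_mu_p [measurable_cong]: "sets (mu_p p) = sets Omega_M"
  unfolding mu_p_def Omega_M_def by (rule sets_PiM_cong) auto

lemma prob_space_mu_p: "prob_space (mu_p p)"
  unfolding mu_p_def by (intro prob_space_PiM) (simp add: prob_space_measure_pmf)

lemma measurable_T_map [measurable]: "T_map \<in> Omega_M \<rightarrow>\<^sub>M Omega_M"
  unfolding Omega_M_def by (rule measurable_PiM_single') (auto simp: T_map_def)

definition window :: "(int \<Rightarrow> bool) \<Rightarrow> int \<Rightarrow> nat \<Rightarrow> bool list" where
  "window \<omega> a n = map (\<lambda>q. \<omega> (a + int q)) [0..<n]"

lemma length_window [simp]: "length (window \<omega> a n) = n"
  by (simp add: window_def)

lemma nth_window [simp]: "q < n \<Longrightarrow> window \<omega> a n ! q = \<omega> (a + int q)"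
  by (simp add: window_def)

lemma window_add: "window \<omega> a (n + m) = window \<omega> a n @ window \<omega> (a + int n) m"
  by (rule nth_equalityI) (auto simp: nth_append)

lemma image_add_of_nat_lessThan: "(\<lambda>q. a + int q) ` {..<n} = {a..<a + int n}"
proof (intro set_eqI iffI)
  fix j assume "j \<in> {a..<a + int n}"
  then have "j = a + int (nat (j - a))" "nat (j - a) < n" by auto
  then show "j \<in> (\<lambda>q. a + int q) ` {..<n}" by blast
qed auto

lemma window_eq_prod_emb:
  assumes "length bs = n"
  shows "{\<omega>. window \<omega> a n = bs} =
    prod_emb UNIV (\<lambda>_. measure_pmf (bernoulli_pmf p)) {a..<a + int n} (Pi\<^sub>E {a..<a + int n} (\<lambda>j. {bs ! nat (j - a)}))"
proof -
  have "window \<omega> a n = bs \<longleftrightarrow> (\<forall>j\<in>{a..<a + int n}. \<omega> j = bs ! nat (j - a))" for \<omega>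
  proof -
    have "window \<omega> a n = bs \<longleftrightarrow> (\<forall>q\<in>{..<n}. \<omega> (a + int q) = bs ! q)"
      using assms by (simp add: list_eq_iff_nth_eq Ball_def)
    also have "\<dots> \<longleftrightarrow> (\<forall>j\<in>(\<lambda>q. a + int q) ` {..<n}. \<omega> j = bs ! nat (j - a))"
      by simp
    finally show ?thesis unfolding image_add_of_nat_lessThan .
  qed
  then show ?thesis by (intro set_eqI) (simp add: prod_emb_iff restrict_PiE_iff Pi_iff)
qed

lemma window_eq_sets: "length bs = n \<Longrightarrow> {\<omega>. window \<omega> a n = bs} \<in> sets (mu_p p)"
  unfolding window_eq_prod_emb[of bs n a p] mu_p_def by (intro sets_PiM_I) auto

lemma window_pred_eq_UN:
  "{\<omega>. P (window \<omega> a n)} = (\<Union>bs\<in>{bs. length bs = n \<and> P bs}. {\<omega>. window \<omega> a n = bs})"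
  by auto

lemma window_sets: "{\<omega>. P (window \<omega> a n)} \<in> sets (mu_p p)"
  unfolding window_pred_eq_UN using finite_bool_lists_length window_eq_sets by auto

context
  fixes p :: real
  assumes p_nonneg: "0 \<le> p" and p_le_1: "p \<le> 1"
begin

lemma pmf_bernoulli_pmf_eq: "pmf (bernoulli_pmf p) b = (if b then p else 1 - p)"
  using p_nonneg p_le_1 by (cases b) simp_all

lemma emeasure_window_eq:
  assumes "length bs = n"
  shows "emeasure (mu_p p) {\<omega>. window \<omega> a n = bs} = ennreal (word_weight p bs)"
proof -
  have "emeasure (mu_p p) {\<omega>. window \<omega> a n = bs} =
      (\<Prod>j\<in>{a..<a + int n}. emeasure (measure_pmf (bernoulli_pmf p)) {bs ! nat (j - a)})"
    unfolding window_eq_prod_emb[OF assms, of a p] mu_p_def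
    by (rule emeasure_PiM_emb) (auto simp: prob_space_measure_pmf)
  also have "\<dots> = (\<Prod>q<n. ennreal (if bs ! q then p else 1 - p))"
    unfolding image_add_of_nat_lessThan[symmetric]
    using p_nonneg p_le_1
    by (subst prod.reindex) (auto simp: inj_on_def emeasure_pmf_single pmf_bernoulli_pmf_eq)
  also have "\<dots> = ennreal (\<Prod>q<n. if bs ! q then p else 1 - p)"
    using p_nonneg p_le_1 by (simp add: prod_ennreal)
  also have "(\<Prod>q<n. if bs ! q then p else 1 - p) = word_weight p bs"
    using assms by (simp add: word_weight_eq_prod)
  finally show ?thesis .
qed

lemma emeasure_window: "emeasure (mu_p p) {\<omega>. P (window \<omega> a n)} = ennreal (word_prob p n P)"
proof -
  define S where "S = {bs::bool list. length bs = n \<and> P bs}"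
  have fin: "finite S"
    unfolding S_def by (rule finite_bool_lists_length)
  have "{\<omega>. P (window \<omega> a n)} = (\<Union>bs\<in>S. {\<omega>. window \<omega> a n = bs})"
    unfolding S_def by (rule window_pred_eq_UN)
  then have "emeasure (mu_p p) {\<omega>. P (window \<omega> a n)} = (\<Sum>bs\<in>S. emeasure (mu_p p) {\<omega>. window \<omega> a n = bs})"
    using fin window_eq_sets[of _ n a p] by (auto simp: S_def disjoint_family_on_def intro!: sum_emeasure[symmetric])
  also have "\<dots> = (\<Sum>bs\<in>S. ennreal (word_weight p bs))"
    by (intro sum.cong refl emeasure_window_eq) (simp add: S_def)
  also have "\<dots> = ennreal (\<Sum>bs\<in>S. word_weight p bs)"
    by (rule sum_ennreal) (simp add: word_weight_nonneg p_nonneg p_le_1)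
  also have "(\<Sum>bs\<in>S. word_weight p bs) = word_prob p n P"
    by (simp add: S_def word_prob_eq_sum)
  finally show ?thesis .
qed

lemma emeasure_window_append:
  "emeasure (mu_p p) {\<omega>. P (window \<omega> a n) \<and> Q (window \<omega> (a + int n) m)} =
     ennreal (word_prob p n P * word_prob p m Q)"
proof -
  have "{\<omega>. P (window \<omega> a n) \<and> Q (window \<omega> (a + int n) m)} =
      {\<omega>. P (take n (window \<omega> a (n + m))) \<and> Q (drop n (window \<omega> a (n + m)))}"
    by (simp add: window_add)
  also have "emeasure (mu_p p) \<dots> = ennreal (word_prob p (n + m) (\<lambda>zs. P (take n zs) \<and> Q (drop n zs)))"
    by (rule emeasure_window[of "\<lambda>zs. P (take n zs) \<and> Q (drop n zs)"])
  also have "word_prob p (n + m) (\<lambda>zs. P (take n zs) \<and> Q (drop n zs)) = word_prob p n P * word_prob p m Q"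
    by (rule word_prob_append) simp
  finally show ?thesis .
qed

end

section \<open>The GHoC state of a configuration\<close>

text \<open>Applied to a thinned configuration this is the state \<open>n\<^sub>i\<close> of the GHoC chain, with the
  encoding of \<open>next_state\<close>.\<close>

definition ghoc_state :: "(int \<Rightarrow> bool) \<Rightarrow> int \<Rightarrow> enat" where
  "ghoc_state x i =
     (if x i then (if x (i - 1) then 1 else 0)
      else if \<exists>d::nat. x (i - int d) then enat (Suc (LEAST d::nat. x (i - int d))) else \<infinity>)"

lemma Least_past_ge_1:
  assumes "\<not> x i" and "\<exists>d::nat. x (i - int d)"
  shows "1 \<le> (LEAST d::nat. x (i - int d))"
proof (rule ccontr)
  assume "\<not> 1 \<le> (LEAST d::nat. x (i - int d))"
  then have "(LEAST d::nat. x (i - int d)) = 0" by simp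
  with LeastI_ex[OF assms(2)] assms(1) show False by simp
qed

lemma ghoc_state_cases:
  obtains "x i" "ghoc_state x i = (if x (i - 1) then 1 else 0)"
  | "\<not> x i" "ghoc_state x i = \<infinity>"
  | m where "\<not> x i" "2 \<le> m" "ghoc_state x i = enat m"
proof (cases "x i")
  case False
  show ?thesis
  proof (cases "\<exists>d::nat. x (i - int d)")
    case True
    then show ?thesis
      using that(3)[of "Suc (LEAST d::nat. x (i - int d))"] False Least_past_ge_1[of x i, OF False True]
      by (simp add: ghoc_state_def)
  qed (use False that(2) in \<open>simp add: ghoc_state_def\<close>)
qed (use that(1) in \<open>simp add: ghoc_state_def\<close>)

lemma ghoc_state_le_1_iff: "ghoc_state x i \<le> 1 \<longleftrightarrow> x i"
  by (cases rule: ghoc_state_cases[of x i]) (auto simp: one_enat_def)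

lemma tau_ghoc_state: "tau (ghoc_state x i) = x i"
  by (cases rule: ghoc_state_cases[of x i]) (auto simp: tau_def zero_enat_def one_enat_def)

lemma ghoc_state_eq_1_iff: "ghoc_state x i = 1 \<longleftrightarrow> x i \<and> x (i - 1)"
  by (cases rule: ghoc_state_cases[of x i]) (auto simp: zero_enat_def one_enat_def)

lemma ghoc_state_eq_0_iff: "ghoc_state x i = 0 \<longleftrightarrow> x i \<and> \<not> x (i - 1)"
  by (cases rule: ghoc_state_cases[of x i]) (auto simp: zero_enat_def one_enat_def)

lemma ghoc_state_eq_infinity_iff: "ghoc_state x i = \<infinity> \<longleftrightarrow> (\<forall>d::nat. \<not> x (i - int d))"
  by (auto simp: ghoc_state_def dest: spec[of _ 0])

lemma ghoc_state_eq_enat_iff: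
  assumes "2 \<le> n"
  shows "ghoc_state x i = enat n \<longleftrightarrow> x (i - int (n - 1)) \<and> (\<forall>d<n - 1. \<not> x (i - int d))"
proof
  assume st: "ghoc_state x i = enat n"
  then have "\<not> x i" using assms ghoc_state_le_1_iff[of x i] by (auto simp: one_enat_def)
  moreover from this st have ex: "\<exists>d::nat. x (i - int d)" by (auto simp: ghoc_state_def split: if_splits)
  ultimately have "(LEAST d::nat. x (i - int d)) = n - 1" using st by (simp add: ghoc_state_def)
  then show "x (i - int (n - 1)) \<and> (\<forall>d<n - 1. \<not> x (i - int d))"
    using LeastI_ex[OF ex] not_less_Least[of _ "\<lambda>d::nat. x (i - int d)"] by metis
next
  assume past: "x (i - int (n - 1)) \<and> (\<forall>d<n - 1. \<not> x (i - int d))"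
  then have "\<not> x i" using assms by (auto dest: spec[of _ 0])
  moreover have "(LEAST d::nat. x (i - int d)) = n - 1"
    by (rule Least_equality) (use past in \<open>auto simp: not_less[symmetric]\<close>)
  moreover have "\<exists>d::nat. x (i - int d)" using past by blast
  ultimately show "ghoc_state x i = enat n" using assms by (simp add: ghoc_state_def)
qed

lemma Least_past_Suc:
  assumes "\<not> x (i + 1)" and "x (i - int d0)"
  shows "(LEAST d::nat. x (i + 1 - int d)) = Suc (LEAST d::nat. x (i - int d))"
  using Least_Suc[of "\<lambda>d::nat. x (i + 1 - int d)" "Suc d0"] assms by simp

lemma ghoc_state_step: "ghoc_state x (i + 1) = next_state (ghoc_state x i) (x (i + 1))"
proof -
  consider "x (i + 1)" | d0 where "\<not> x (i + 1)" "x (i - int d0)"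
    | "\<not> x (i + 1)" "\<forall>d::nat. \<not> x (i - int d)"
    by blast
  then show ?thesis
  proof cases
    case 1
    then show ?thesis using ghoc_state_le_1_iff[of x i] by (simp add: ghoc_state_def next_state_def)
  next
    case (2 d0)
    define L where "L = (LEAST d::nat. x (i - int d))"
    have "\<exists>d::nat. x (i + 1 - int d)" using 2 by (intro exI[of _ "Suc d0"]) simp
    then have "ghoc_state x (i + 1) = enat (Suc (Suc L))"
      using 2 Least_past_Suc[OF 2] by (simp add: ghoc_state_def L_def)
    moreover have "next_state (ghoc_state x i) False = enat (Suc (Suc L))"
    proof (cases "x i")
      case True
      then show ?thesis
        using ghoc_state_le_1_iff[of x i] by (simp add: L_def next_state_def numeral_eq_enat)
    next
      case False
      then have "ghoc_state x i = enat (Suc L)" using 2 by (auto simp: ghoc_state_def L_def)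
      then show ?thesis by (simp add: next_state_False_enat)
    qed
    ultimately show ?thesis using 2 by simp
  next
    case 3
    have "\<not> x (i + 1 - int d)" for d :: nat
      using 3 by (cases d) (auto simp: algebra_simps)
    then show ?thesis using 3 spec[OF 3(2), of 0] by (simp add: ghoc_state_def next_state_def)
  qed
qed

lemma measurable_ghoc_state [measurable]: "(\<lambda>x. ghoc_state x i) \<in> Omega_M \<rightarrow>\<^sub>M count_space UNIV"
  unfolding ghoc_state_def Omega_M_def by measurable

primrec admissible :: "enat \<Rightarrow> enat list \<Rightarrow> bool" where
  "admissible s [] = True"
| "admissible s (t # ts) \<longleftrightarrow> t = next_state s (tau t) \<and> admissible t ts"

lemma ghoc_state_path_iff:
  "(\<forall>j<length (s # ts). ghoc_state x (k + int j) = (s # ts) ! j) \<longleftrightarrow>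
     admissible s ts \<and> ghoc_state x k = s \<and> (\<forall>j<length ts. x (k + 1 + int j) = tau (ts ! j))"
proof (induction ts arbitrary: s k)
  case (Cons t ts)
  have step: "ghoc_state x k = s \<Longrightarrow> ghoc_state x (k + 1) = t \<longleftrightarrow> t = next_state s (tau t) \<and> x (k + 1) = tau t"
    using ghoc_state_step[of x k] tau_ghoc_state[of x "k + 1"] by auto
  have "(\<forall>j<length (s # t # ts). ghoc_state x (k + int j) = (s # t # ts) ! j) \<longleftrightarrow>
      ghoc_state x k = s \<and> (\<forall>j<length (t # ts). ghoc_state x (k + 1 + int j) = (t # ts) ! j)"
    by (simp only: length_Cons All_less_Suc2) (simp add: ac_simps)
  also have "\<dots> \<longleftrightarrow> admissible s (t # ts) \<and> ghoc_state x k = s \<and>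
      (\<forall>j<length (t # ts). x (k + 1 + int j) = tau ((t # ts) ! j))"
    using Cons.IH[of t "k + 1"] step by (auto simp: All_less_Suc2 ac_simps)
  finally show ?case .
qed simp

lemma Pi_p_nonzero_imp: "Pi_p p s t \<noteq> 0 \<Longrightarrow> t = next_state s (tau t)"
  by (cases s) (auto simp: Pi_p_def next_state_def tau_def one_enat_def zero_enat_def
      numeral_eq_enat split: if_splits)

lemma prod_Pi_p_path:
  "(\<Prod>j<length (s # ts) - 1. Pi_p p ((s # ts) ! j) ((s # ts) ! Suc j)) =
     (if admissible s ts then emission_prob p s (map tau ts) else 0)"
proof (induction ts arbitrary: s)
  case (Cons t ts)
  have "(\<Prod>j<length (s # t # ts) - 1. Pi_p p ((s # t # ts) ! j) ((s # t # ts) ! Suc j)) =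
      Pi_p p s t * (\<Prod>j<length (t # ts) - 1. Pi_p p ((t # ts) ! j) ((t # ts) ! Suc j))"
    by (simp del: prod.lessThan_Suc add: prod.lessThan_Suc_shift)
  then show ?case using Cons.IH[of t] Pi_p_nonzero_imp[of p s t] by auto
qed simp

lemma thin_window: "1 \<le> q \<Longrightarrow> Suc q < n \<Longrightarrow> thin (nth (window \<omega> a n)) q = T_map \<omega> (a + int q)"
  by (simp add: thin_def T_map_def of_nat_diff algebra_simps)

lemma occupied_thinned_window:
  "occupied_thinned w (window \<omega> a (length w + 2)) \<longleftrightarrow>
     \<omega> a \<and> (\<forall>j<length w. T_map \<omega> (a + 1 + int j) = w ! j)"
  unfolding occupied_thinned_def by (simp add: thin_window ac_simps)

lemma T_map_pair_iff: "T_map \<omega> k \<and> T_map \<omega> (k - 1) \<longleftrightarrow> \<omega> (k - 1) \<and> \<omega> k"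
  by (auto simp: T_map_def)

lemma T_map_start_iff: "T_map \<omega> k \<and> \<not> T_map \<omega> (k - 1) \<longleftrightarrow> \<not> \<omega> (k - 1) \<and> \<omega> k \<and> \<omega> (k + 1)"
  by (auto simp: T_map_def)

lemma T_map_end_iff: "T_map \<omega> k \<and> \<not> T_map \<omega> (k + 1) \<longleftrightarrow> \<omega> (k - 1) \<and> \<omega> k \<and> \<not> T_map \<omega> (k + 1)"
  by (auto simp: T_map_def)

lemma all_less_reverse: "(\<forall>d<m. P (k - int d)) \<longleftrightarrow> (\<forall>j<m. P (k - int m + 1 + int j))"
proof
  assume H: "\<forall>d<m. P (k - int d)"
  show "\<forall>j<m. P (k - int m + 1 + int j)"
  proof (intro allI impI)
    fix j assume "j < m"
    then have "k - int m + 1 + int j = k - int (m - 1 - j)" "m - 1 - j < m" by (simp_all add: of_nat_diff)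
    then show "P (k - int m + 1 + int j)" using H by metis
  qed
next
  assume H: "\<forall>j<m. P (k - int m + 1 + int j)"
  show "\<forall>d<m. P (k - int d)"
  proof (intro allI impI)
    fix d assume "d < m"
    then have "k - int d = k - int m + 1 + int (m - 1 - d)" "m - 1 - d < m" by (simp_all add: of_nat_diff)
    then show "P (k - int d)" using H by metis
  qed
qed

definition state_event :: "int \<Rightarrow> enat \<Rightarrow> bool list \<Rightarrow> (int \<Rightarrow> bool) set" where
  "state_event k s w =
     {\<omega>. ghoc_state (T_map \<omega>) k = s \<and> (\<forall>j<length w. T_map \<omega> (k + 1 + int j) = w ! j)}"

definition pair_free_blocks :: "nat \<Rightarrow> bool list \<Rightarrow> bool" where
  "pair_free_blocks r zs \<longleftrightarrow> (\<forall>i<r. \<not> (zs ! (2 * i) \<and> zs ! (2 * i + 1)))"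

lemma word_prob_pair_free_blocks: "word_prob p (2 * r) (pair_free_blocks r) = (1 - p * p) ^ r"
proof (induction r)
  case 0
  then show ?case by (simp add: pair_free_blocks_def)
next
  case (Suc r)
  have "word_prob p (2 + 2 * r) (pair_free_blocks (Suc r)) =
      word_prob p 2 (\<lambda>xs. \<not> (xs ! 0 \<and> xs ! 1)) * word_prob p (2 * r) (pair_free_blocks r)"
  proof (rule word_prob_append)
    fix xs ys :: "bool list"
    assume "length xs = 2" "length ys = 2 * r"
    then show "pair_free_blocks (Suc r) (xs @ ys) \<longleftrightarrow> \<not> (xs ! 0 \<and> xs ! 1) \<and> pair_free_blocks r ys"
      unfolding pair_free_blocks_def by (simp add: All_less_Suc2 nth_append)
  qed
  then show ?case
    using Suc by (simp add: numeral_2_eq_2 word_prob.simps(2) algebra_simps)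
qed

text \<open>Each of the disjoint blocks of two sites before \<open>k\<close> must avoid a pair, an event of
  probability \<open>1 - p\<^sup>2\<close>.\<close>

lemma ghoc_state_infinity_subset:
  "{\<omega>. ghoc_state (T_map \<omega>) k = \<infinity>} \<subseteq> {\<omega>. pair_free_blocks r (window \<omega> (k - 2 * int r) (2 * r))}"
proof (intro subsetI CollectI)
  fix \<omega> assume "\<omega> \<in> {\<omega>. ghoc_state (T_map \<omega>) k = \<infinity>}"
  then have none: "\<not> T_map \<omega> (k - int d)" for d
    by (simp add: ghoc_state_eq_infinity_iff)
  show "pair_free_blocks r (window \<omega> (k - 2 * int r) (2 * r))"
    unfolding pair_free_blocks_def
  proof (intro allI impI notI)
    fix i assume "i < r" and
      pair: "window \<omega> (k - 2 * int r) (2 * r) ! (2 * i) \<and> window \<omega> (k - 2 * int r) (2 * r) ! (2 * i + 1)"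
    have "k - 2 * int r + int (2 * i) = k - int (2 * r - 2 * i)"
      using \<open>i < r\<close> by (simp add: of_nat_diff)
    moreover have "T_map \<omega> (k - 2 * int r + int (2 * i))"
      using pair \<open>i < r\<close> by (simp add: T_map_def algebra_simps)
    ultimately show False using none by metis
  qed
qed

context ghoc_parameter
begin

lemma emeasure_site_window:
  "emeasure (mu_p p) {\<omega>. \<omega> (a - 1) = b \<and> P (window \<omega> a n)} =
     ennreal ((if b then p else 1 - p) * word_prob p n P)"
  using emeasure_window_append[of p "\<lambda>bs. bs ! 0 = b" "a - 1" 1 P n] p_pos p_less_1
  by (cases b) simp_all

lemma emeasure_state_event_1:
  "emeasure (mu_p p) (state_event k 1 w) = ennreal (p * p * emission_prob p 1 w)"
proof -
  have "state_event k 1 w = {\<omega>. \<omega> (k - 1) = True \<and> occupied_thinned w (window \<omega> k (length w + 2))}"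
    unfolding state_event_def occupied_thinned_window ghoc_state_eq_1_iff T_map_pair_iff by auto
  then show ?thesis
    using emeasure_site_window[of k True "occupied_thinned w" "length w + 2"]
      occupied_thinned_prob_eq_emission[of w]
    by (simp add: occupied_thinned_prob_def mult.assoc)
qed

lemma emeasure_state_event_0:
  "emeasure (mu_p p) (state_event k 0 w) = ennreal ((1 - p) * p * p * emission_prob p 0 w)"
proof -
  have "state_event k 0 w =
      {\<omega>. \<omega> (k - 1) = False \<and> (\<lambda>u. occupied_thinned w u \<and> u ! 1) (window \<omega> k (length w + 2))}"
    unfolding state_event_def occupied_thinned_window ghoc_state_eq_0_iff T_map_start_iff by auto
  then show ?thesis
    using emeasure_site_window[of k False "\<lambda>u. occupied_thinned w u \<and> u ! 1" "length w + 2"]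
      occupied_pair_thinned_prob_eq_emission[OF occupied_thinned_prob_eq_emission[of w]]
    by (simp add: mult.assoc)
qed

lemma emeasure_state_event_enat:
  assumes "2 \<le> n"
  shows "emeasure (mu_p p) (state_event k (enat n) w) =
    ennreal (p * pair_free_prob p n * emission_prob p (enat n) w)"
proof -
  define m where "m = n - 1"
  define b where "b = k - int m"
  define v where "v = replicate m False @ w"
  have m: "1 \<le> m" "n = Suc m" using assms by (simp_all add: m_def)
  have "state_event k (enat n) w = {\<omega>. \<omega> (b - 1) = True \<and> occupied_thinned v (window \<omega> b (length v + 2))}"
  proof (intro set_eqI)
    fix \<omega>
    let ?T = "T_map \<omega>"
    have state: "ghoc_state ?T k = enat n \<longleftrightarrow> ?T b \<and> (\<forall>j<m. \<not> ?T (b + 1 + int j))"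
      using ghoc_state_eq_enat_iff[OF assms, of ?T k] all_less_reverse[of m "\<lambda>i. \<not> ?T i" k]
      by (simp add: m_def b_def ac_simps)
    have word: "(\<forall>j<length v. ?T (b + 1 + int j) = v ! j) \<longleftrightarrow>
        (\<forall>j<m. \<not> ?T (b + 1 + int j)) \<and> (\<forall>i<length w. ?T (k + 1 + int i) = w ! i)"
      unfolding v_def length_append length_replicate all_less_add_iff
      by (simp add: nth_append b_def add.assoc)
    have "\<not> ?T (b + 1)" if "\<forall>j<m. \<not> ?T (b + 1 + int j)"
      using that m(1) by (auto dest: spec[of _ 0])
    then have "?T b \<and> (\<forall>j<m. \<not> ?T (b + 1 + int j)) \<longleftrightarrow>
        \<omega> (b - 1) \<and> \<omega> b \<and> (\<forall>j<m. \<not> ?T (b + 1 + int j))"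
      using T_map_end_iff[of \<omega> b] by blast
    then show "\<omega> \<in> state_event k (enat n) w \<longleftrightarrow>
        \<omega> \<in> {\<omega>. \<omega> (b - 1) = True \<and> occupied_thinned v (window \<omega> b (length v + 2))}"
      unfolding state_event_def mem_Collect_eq occupied_thinned_window state word by blast
  qed
  then have "emeasure (mu_p p) (state_event k (enat n) w) = ennreal (p * occupied_thinned_prob p v)"
    using emeasure_site_window[of b True "occupied_thinned v" "length v + 2"]
    by (simp add: occupied_thinned_prob_def)
  also have "p * occupied_thinned_prob p v = p * (p * emission_prob p 1 (replicate m False)) * emission_prob p (enat n) w"
    by (simp add: occupied_thinned_prob_eq_emission v_def emission_prob_append foldl_next_state_zeros m)
  also have "\<dots> = p * pair_free_prob p n * emission_prob p (enat n) w"
    using emission_prob_zeros[OF m(1)] m by simp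
  finally show ?thesis .
qed

lemma emeasure_ghoc_state_infinity: "emeasure (mu_p p) {\<omega>. ghoc_state (T_map \<omega>) k = \<infinity>} = 0"
proof -
  have "emeasure (mu_p p) {\<omega>. ghoc_state (T_map \<omega>) k = \<infinity>} \<le> ennreal ((1 - p * p) ^ r)" for r
  proof -
    have "emeasure (mu_p p) {\<omega>. ghoc_state (T_map \<omega>) k = \<infinity>} \<le>
        emeasure (mu_p p) {\<omega>. pair_free_blocks r (window \<omega> (k - 2 * int r) (2 * r))}"
      by (intro emeasure_mono window_sets ghoc_state_infinity_subset)
    also have "\<dots> = ennreal ((1 - p * p) ^ r)"
      using p_pos p_less_1 by (simp add: emeasure_window word_prob_pair_free_blocks)
    finally show ?thesis .
  qed
  moreover have "(\<lambda>r. ennreal ((1 - p * p) ^ r)) \<longlonglongrightarrow> ennreal 0"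
  proof -
    have "0 < p * p" "p * p < 1 * 1"
      using p_pos p_less_1 by (simp, intro mult_strict_mono) simp_all
    then show ?thesis by (intro tendsto_ennrealI LIMSEQ_power_zero) simp
  qed
  ultimately have "emeasure (mu_p p) {\<omega>. ghoc_state (T_map \<omega>) k = \<infinity>} \<le> ennreal 0"
    using LIMSEQ_le_const by blast
  then show ?thesis by simp
qed

end

section \<open>Cylinder sets of sequence spaces\<close>

definition cylinder :: "int \<Rightarrow> 'a list \<Rightarrow> (int \<Rightarrow> 'a) set" where
  "cylinder k xs = {n. \<forall>j<length xs. n (k + int j) = xs ! j}"

lemma cylinder_Nil [simp]: "cylinder k [] = UNIV"
  by (simp add: cylinder_def)

lemma cylinder_Cons: "cylinder k (x # xs) = {n. n k = x} \<inter> cylinder (k + 1) xs"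
  by (auto simp: cylinder_def All_less_Suc2 ac_simps)

lemma cylinder_sets: "cylinder k xs \<in> sets (\<Pi>\<^sub>M i\<in>UNIV. count_space (UNIV :: 'a set))"
proof -
  have "{n \<in> space (\<Pi>\<^sub>M i\<in>UNIV. count_space UNIV). \<forall>j<length xs. n (k + int j) = xs ! j}
      \<in> sets (\<Pi>\<^sub>M i\<in>UNIV. count_space (UNIV :: 'a set))"
    by measurable
  then show ?thesis by (simp add: cylinder_def space_PiM)
qed

lemma prod_emb_eq_UN_cylinders:
  fixes A :: "int \<Rightarrow> 'a set"
  assumes "\<And>i. i \<in> J \<Longrightarrow> \<exists>j<m. i = k + int j"
  shows "prod_emb UNIV (\<lambda>_. count_space UNIV) J (Pi\<^sub>E J A) =
    (\<Union>xs\<in>{xs. length xs = m \<and> (\<forall>j<m. k + int j \<in> J \<longrightarrow> xs ! j \<in> A (k + int j))}. cylinder k xs)"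
proof -
  have "prod_emb UNIV (\<lambda>_. count_space UNIV) J (Pi\<^sub>E J A) = {n. \<forall>i\<in>J. n i \<in> A i}"
    by (auto simp: prod_emb_iff PiE_iff restrict_def extensional_def)
  also have "\<dots> = (\<Union>xs\<in>{xs. length xs = m \<and> (\<forall>j<m. k + int j \<in> J \<longrightarrow> xs ! j \<in> A (k + int j))}. cylinder k xs)"
  proof (intro set_eqI iffI)
    fix n assume "n \<in> {n. \<forall>i\<in>J. n i \<in> A i}"
    then show "n \<in> (\<Union>xs\<in>{xs. length xs = m \<and> (\<forall>j<m. k + int j \<in> J \<longrightarrow> xs ! j \<in> A (k + int j))}. cylinder k xs)"
      by (intro UN_I[of "map (\<lambda>j. n (k + int j)) [0..<m]"]) (auto simp: cylinder_def)
  qed (use assms in \<open>fastforce simp: cylinder_def\<close>)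
  finally show ?thesis .
qed

lemma measure_eqI_cylinders:
  fixes P Q :: "(int \<Rightarrow> 'a::countable) measure"
  assumes "sets P = sets (\<Pi>\<^sub>M i\<in>UNIV. count_space UNIV)" and "sets Q = sets (\<Pi>\<^sub>M i\<in>UNIV. count_space UNIV)"
    and "finite_measure P"
    and eq: "\<And>k xs. xs \<noteq> [] \<Longrightarrow> emeasure P (cylinder k xs) = emeasure Q (cylinder k xs)"
  shows "P = Q"
proof (rule measure_eqI_PiM_infinite[OF assms(1,2) _ assms(3)])
  fix J :: "int set" and A :: "int \<Rightarrow> 'a set"
  assume "finite J"
  define N where "N = Max (insert 0 ((\<lambda>i. nat \<bar>i\<bar>) ` J))"
  define k where "k = - int N"
  define m where "m = 2 * N + 1"
  define Idx where "Idx = {xs. length xs = m \<and> (\<forall>j<m. k + int j \<in> J \<longrightarrow> xs ! j \<in> A (k + int j))}"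
  have "\<exists>j<m. i = k + int j" if "i \<in> J" for i
  proof -
    have "nat \<bar>i\<bar> \<le> N" unfolding N_def using \<open>finite J\<close> that by (intro Max_ge) auto
    then show ?thesis by (intro exI[of _ "nat (i - k)"]) (auto simp: k_def m_def)
  qed
  then have U: "prod_emb UNIV (\<lambda>_. count_space UNIV) J (Pi\<^sub>E J A) = (\<Union>xs\<in>Idx. cylinder k xs)"
    unfolding Idx_def by (rule prod_emb_eq_UN_cylinders)
  have disj: "disjoint_family_on (cylinder k) Idx"
    unfolding disjoint_family_on_def Idx_def cylinder_def by (auto simp: list_eq_iff_nth_eq)
  have "emeasure P (\<Union>xs\<in>Idx. cylinder k xs) = (\<integral>\<^sup>+xs. emeasure P (cylinder k xs) \<partial>count_space Idx)"
    using assms(1) cylinder_sets disj by (intro emeasure_UN_countable countableI_type) auto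
  also have "\<dots> = (\<integral>\<^sup>+xs. emeasure Q (cylinder k xs) \<partial>count_space Idx)"
    by (intro nn_integral_cong eq) (auto simp: Idx_def m_def)
  also have "\<dots> = emeasure Q (\<Union>xs\<in>Idx. cylinder k xs)"
    using assms(2) cylinder_sets disj by (intro emeasure_UN_countable[symmetric] countableI_type) auto
  finally show "emeasure P (prod_emb UNIV (\<lambda>_. count_space UNIV) J (Pi\<^sub>E J A)) =
      emeasure Q (prod_emb UNIV (\<lambda>_. count_space UNIV) J (Pi\<^sub>E J A))"
    unfolding U .
qed

text \<open>The probability that the thinned field is in state \<open>s\<close> at a given site
  (\<open>emeasure_state_event\<close> with the empty word).\<close>

definition ghoc_weight :: "real \<Rightarrow> enat \<Rightarrow> real" where
  "ghoc_weight p s =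
     (case s of
        enat n \<Rightarrow> if n = 0 then (1 - p) * p * p else if n = 1 then p * p else p * pair_free_prob p n
      | \<infinity> \<Rightarrow> 0)"

definition ghoc_law :: "real \<Rightarrow> (int \<Rightarrow> enat) measure" where
  "ghoc_law p = distr (mu_p p) S_path_M (\<lambda>\<omega> i. ghoc_state (T_map \<omega>) i)"

definition ghoc_stationary :: "real \<Rightarrow> enat pmf" where
  "ghoc_stationary p = embed_pmf (ghoc_weight p)"

lemma measurable_ghoc_state_T_map [measurable]:
  "(\<lambda>\<omega>. ghoc_state (T_map \<omega>) i) \<in> Omega_M \<rightarrow>\<^sub>M count_space UNIV"
  using measurable_compose[OF measurable_T_map measurable_ghoc_state] by simp

lemma ghoc_state_event_sets: "{\<omega>. ghoc_state (T_map \<omega>) k = s} \<in> sets (mu_p p)"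
  using measurable_sets[OF measurable_ghoc_state_T_map[of k], of "{s}"] by (simp add: vimage_def sets_mu_p)

lemma measurable_ghoc_path: "(\<lambda>\<omega> i. ghoc_state (T_map \<omega>) i) \<in> mu_p p \<rightarrow>\<^sub>M S_path_M"
  unfolding S_path_M_def
  by (rule measurable_PiM_single') (simp_all add: measurable_cong_sets[OF sets_mu_p refl])

lemma cylinder_sets_S_path_M: "cylinder k xs \<in> sets S_path_M"
  unfolding S_path_M_def by (rule cylinder_sets)

lemma sets_ghoc_law [simp]: "sets (ghoc_law p) = sets S_path_M"
  by (simp add: ghoc_law_def)

lemma prob_space_ghoc_law: "prob_space (ghoc_law p)"
  unfolding ghoc_law_def by (rule prob_space.prob_space_distr[OF prob_space_mu_p measurable_ghoc_path])

lemma distr_tau_ghoc_law: "distr (ghoc_law p) Omega_M (\<lambda>n i. tau (n i)) = TBF p"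
proof -
  have "(\<lambda>n i. tau (n i)) \<in> S_path_M \<rightarrow>\<^sub>M Omega_M"
    unfolding S_path_M_def Omega_M_def
    by (rule measurable_PiM_single') (simp_all add: measurable_component_singleton)
  then have "distr (ghoc_law p) Omega_M (\<lambda>n i. tau (n i)) =
      distr (mu_p p) Omega_M ((\<lambda>n i. tau (n i)) \<circ> (\<lambda>\<omega> i. ghoc_state (T_map \<omega>) i))"
    unfolding ghoc_law_def by (rule distr_distr[OF _ measurable_ghoc_path])
  also have "\<dots> = distr (mu_p p) Omega_M T_map"
    by (rule distr_cong) (simp_all add: tau_ghoc_state o_def)
  finally show ?thesis by (simp add: TBF_def)
qed

context ghoc_parameter
begin

lemma ghoc_weight_0 [simp]: "ghoc_weight p 0 = (1 - p) * p * p"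
  and ghoc_weight_1 [simp]: "ghoc_weight p 1 = p * p"
  and ghoc_weight_infinity [simp]: "ghoc_weight p \<infinity> = 0"
  by (simp_all add: ghoc_weight_def zero_enat_def one_enat_def)

lemma ghoc_weight_nonneg: "0 \<le> ghoc_weight p s"
  using p_pos p_less_1 pair_free_prob_pos
  by (auto simp: ghoc_weight_def less_imp_le split: enat.split)

lemma emeasure_state_event:
  "emeasure (mu_p p) (state_event k s w) = ennreal (ghoc_weight p s * emission_prob p s w)"
proof (cases s)
  case (enat n)
  consider "n = 0" | "n = 1" | "2 \<le> n" by linarith
  then show ?thesis
    using enat emeasure_state_event_0 emeasure_state_event_1 emeasure_state_event_enat[of n]
    by cases (simp_all add: ghoc_weight_def zero_enat_def one_enat_def mult.assoc)
next
  case infinity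
  have "emeasure (mu_p p) (state_event k s w) \<le> emeasure (mu_p p) {\<omega>. ghoc_state (T_map \<omega>) k = \<infinity>}"
    using infinity by (intro emeasure_mono ghoc_state_event_sets) (auto simp: state_event_def)
  then show ?thesis using infinity by (simp add: emeasure_ghoc_state_infinity ghoc_weight_def)
qed

lemma nn_integral_ghoc_weight: "(\<integral>\<^sup>+ s. ennreal (ghoc_weight p s) \<partial>count_space UNIV) = 1"
proof -
  have "(\<integral>\<^sup>+ s. ennreal (ghoc_weight p s) \<partial>count_space UNIV) =
      (\<integral>\<^sup>+ s. emeasure (mu_p p) {\<omega>. ghoc_state (T_map \<omega>) 0 = s} \<partial>count_space UNIV)"
    using emeasure_state_event[of 0 _ "[]"] by (simp add: state_event_def)
  also have "\<dots> = emeasure (mu_p p) (\<Union>s. {\<omega>. ghoc_state (T_map \<omega>) 0 = s})"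
    by (rule emeasure_UN_countable[symmetric]) (auto simp: disjoint_family_on_def ghoc_state_event_sets)
  also have "(\<Union>s. {\<omega>. ghoc_state (T_map \<omega>) 0 = s}) = space (mu_p p)"
    by auto
  finally show ?thesis
    using prob_space.emeasure_space_1[OF prob_space_mu_p] by simp
qed

lemma pmf_ghoc_stationary: "pmf (ghoc_stationary p) s = ghoc_weight p s"
  unfolding ghoc_stationary_def
  by (rule pmf_embed_pmf) (use ghoc_weight_nonneg nn_integral_ghoc_weight in auto)

lemma emeasure_ghoc_law_cylinder:
  "emeasure (ghoc_law p) (cylinder k (s # ts)) =
     ennreal (pmf (ghoc_stationary p) s * (\<Prod>j<length (s # ts) - 1. Pi_p p ((s # ts) ! j) ((s # ts) ! Suc j)))"
proof -
  have "(\<lambda>\<omega> i. ghoc_state (T_map \<omega>) i) -` cylinder k (s # ts) \<inter> space (mu_p p) =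
      (if admissible s ts then state_event k s (map tau ts) else {})"
    using ghoc_state_path_iff[of s ts "T_map _" k] by (auto simp: cylinder_def state_event_def)
  then show ?thesis
    unfolding prod_Pi_p_path ghoc_law_def
    by (simp add: emeasure_distr[OF measurable_ghoc_path cylinder_sets_S_path_M] emeasure_state_event
        pmf_ghoc_stationary)
qed

lemma ghoc_law_stationary_chain_law: "stationary_chain_law p (ghoc_stationary p) (ghoc_law p)"
  unfolding stationary_chain_law_def
proof (intro conjI allI impI)
  fix k :: int and xs :: "enat list"
  assume "xs \<noteq> []"
  then obtain s ts where "xs = s # ts" by (cases xs) auto
  moreover have "{n \<in> space (ghoc_law p). \<forall>j<length xs. n (k + int j) = xs ! j} = cylinder k xs"
    by (simp add: cylinder_def ghoc_law_def)
  ultimately show "emeasure (ghoc_law p) {n \<in> space (ghoc_law p). \<forall>j<length xs. n (k + int j) = xs ! j} =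
      ennreal (pmf (ghoc_stationary p) (xs ! 0) * (\<Prod>j<length xs - 1. Pi_p p (xs ! j) (xs ! Suc j)))"
    by (simp add: emeasure_ghoc_law_cylinder)
qed (simp_all add: prob_space_ghoc_law)

end

section \<open>Stationarity and uniqueness\<close>

lemma infsum_eq_of_nn_integral:
  fixes f :: "'a \<Rightarrow> real"
  assumes "\<And>x. 0 \<le> f x" and "(\<integral>\<^sup>+x. ennreal (f x) \<partial>count_space UNIV) = ennreal c" and "0 \<le> c"
  shows "(\<Sum>\<^sub>\<infinity>x. f x) = c"
proof -
  have "integrable (count_space UNIV) f"
    by (rule integrableI_nonneg) (use assms in auto)
  then have "infsetsum f UNIV = infsum f UNIV"
    by (intro infsetsum_infsum) (simp add: abs_summable_on_def)
  moreover have "infsetsum f UNIV = c"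
    using assms by (subst infsetsum_conv_nn_integral) auto
  ultimately show ?thesis by simp
qed

lemma stationary_dist_pmf_eq_sum:
  assumes "stationary_dist p \<sigma>" and "finite S" and "\<And>s. s \<notin> S \<Longrightarrow> Pi_p p s t = 0"
  shows "pmf \<sigma> t = (\<Sum>s\<in>S. pmf \<sigma> s * Pi_p p s t)"
proof -
  have "pmf \<sigma> t = (\<Sum>\<^sub>\<infinity>s. pmf \<sigma> s * Pi_p p s t)"
    using assms(1) unfolding stationary_dist_def by blast
  also have "\<dots> = (\<Sum>\<^sub>\<infinity>s\<in>S. pmf \<sigma> s * Pi_p p s t)"
    by (rule infsum_cong_neutral) (use assms(3) in auto)
  finally show ?thesis using assms(2) by simp
qed

lemma stationary_dist_balance:
  assumes "stationary_dist p \<sigma>"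
  shows stationary_dist_balance_1: "pmf \<sigma> 1 = pmf \<sigma> 0 + pmf \<sigma> 1 * p"
    and stationary_dist_balance_2: "pmf \<sigma> 2 = pmf \<sigma> 1 * (1 - p)"
    and stationary_dist_balance_Suc:
      "2 \<le> n \<Longrightarrow> pmf \<sigma> (enat (Suc n)) = pmf \<sigma> (enat n) * g_p p (enat n)"
    and stationary_dist_balance_infinity: "pmf \<sigma> \<infinity> = pmf \<sigma> \<infinity> * lam_PF p"
proof -
  have "Pi_p p s 1 = 0" if "s \<notin> {0, 1}" for s
    using that by (cases s) (auto simp: Pi_p_def one_enat_def zero_enat_def)
  then show "pmf \<sigma> 1 = pmf \<sigma> 0 + pmf \<sigma> 1 * p"
    using stationary_dist_pmf_eq_sum[OF assms, of "{0, 1}" 1] by (simp add: Pi_p_def)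
  have "Pi_p p s 2 = 0" if "s \<notin> {1}" for s
    using that by (cases s) (auto simp: Pi_p_def one_enat_def zero_enat_def numeral_eq_enat)
  then show "pmf \<sigma> 2 = pmf \<sigma> 1 * (1 - p)"
    using stationary_dist_pmf_eq_sum[OF assms, of "{1}" 2] by (simp add: Pi_p_def)
  assume n: "2 \<le> n"
  have "Pi_p p s (enat (Suc n)) = 0" if "s \<notin> {enat n}" for s
    using that n by (cases s) (auto simp: Pi_p_def one_enat_def zero_enat_def numeral_eq_enat)
  then show "pmf \<sigma> (enat (Suc n)) = pmf \<sigma> (enat n) * g_p p (enat n)"
    using stationary_dist_pmf_eq_sum[OF assms, of "{enat n}" "enat (Suc n)"] n by (simp add: Pi_p_enat_Suc)
next
  have "Pi_p p s \<infinity> = 0" if "s \<notin> {\<infinity>}" for s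
    using that by (cases s) (auto simp: Pi_p_def one_enat_def zero_enat_def)
  then show "pmf \<sigma> \<infinity> = pmf \<sigma> \<infinity> * lam_PF p"
    using stationary_dist_pmf_eq_sum[OF assms, of "{\<infinity>}" \<infinity>] by (simp add: Pi_p_def g_p_def)
qed

context ghoc_parameter
begin

lemma stationary_dist_ghoc_stationary: "stationary_dist p (ghoc_stationary p)"
  unfolding stationary_dist_def
proof
  fix t
  have "ennreal (pmf (ghoc_stationary p) t) = emeasure (ghoc_law p) (cylinder 1 [t])"
    using emeasure_ghoc_law_cylinder[of 1 t "[]"] by simp
  also have "cylinder 1 [t] = (\<Union>s. cylinder 0 [s, t])"
    by (auto simp: cylinder_Cons)
  also have "emeasure (ghoc_law p) (\<Union>s. cylinder 0 [s, t]) =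
      (\<integral>\<^sup>+s. emeasure (ghoc_law p) (cylinder 0 [s, t]) \<partial>count_space UNIV)"
  proof (rule emeasure_UN_countable)
    show "disjoint_family_on (\<lambda>s. cylinder 0 [s, t]) UNIV"
      by (auto simp: disjoint_family_on_def cylinder_Cons)
  qed (simp_all add: cylinder_sets_S_path_M)
  also have "\<dots> = (\<integral>\<^sup>+s. ennreal (pmf (ghoc_stationary p) s * Pi_p p s t) \<partial>count_space UNIV)"
    using emeasure_ghoc_law_cylinder[of 0 _ "[t]"] by simp
  finally show "pmf (ghoc_stationary p) t = (\<Sum>\<^sub>\<infinity>s. pmf (ghoc_stationary p) s * Pi_p p s t)"
    by (intro infsum_eq_of_nn_integral[symmetric]) (simp_all add: Pi_p_nonneg)
qed

lemma ghoc_weight_Suc: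
  "2 \<le> n \<Longrightarrow> ghoc_weight p (enat (Suc n)) = g_p p (enat n) * ghoc_weight p (enat n)"
  using pair_free_prob_pos[of n] by (simp add: ghoc_weight_def g_p_eq_pair_free_ratio)

lemma stationary_dist_proportional:
  assumes "stationary_dist p \<sigma>"
  obtains c where "0 \<le> c" and "\<And>s. pmf \<sigma> s = c * ghoc_weight p s"
proof -
  define c where "c = pmf \<sigma> 1 / (p * p)"
  have pp: "p * p \<noteq> 0" using p_pos by simp
  have fn: "pmf \<sigma> (enat n) = c * ghoc_weight p (enat n)" if "2 \<le> n" for n
    using that
  proof (induction n rule: nat_induct_at_least)
    case base
    have "ghoc_weight p (enat 2) = p * p * (1 - p)"
      by (simp add: ghoc_weight_def pair_free_prob_2)
    moreover have "pmf \<sigma> 1 / (p * p) * (p * p * (1 - p)) = pmf \<sigma> 1 * (1 - p)"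
      using pp by simp
    ultimately show ?case using stationary_dist_balance_2[OF assms] by (simp add: c_def numeral_eq_enat)
  next
    case (Suc n)
    then show ?case using stationary_dist_balance_Suc[OF assms Suc.hyps] ghoc_weight_Suc[of n] by simp
  qed
  have f1: "pmf \<sigma> 1 = c * ghoc_weight p 1"
    using pp by (simp add: c_def)
  have f0: "pmf \<sigma> 0 = c * ghoc_weight p 0"
  proof -
    have "pmf \<sigma> 0 = pmf \<sigma> 1 - pmf \<sigma> 1 * p" using stationary_dist_balance_1[OF assms] by linarith
    then show ?thesis using f1 by (simp add: algebra_simps)
  qed
  have "pmf \<sigma> \<infinity> = c * ghoc_weight p \<infinity>"
    using stationary_dist_balance_infinity[OF assms] lam_bounds by simp
  moreover have "pmf \<sigma> (enat n) = c * ghoc_weight p (enat n)" for n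
    using f0 f1 fn[of n] by (cases "n \<le> 1") (auto simp: le_Suc_eq zero_enat_def one_enat_def)
  ultimately have "pmf \<sigma> s = c * ghoc_weight p s" for s by (cases s) simp_all
  moreover have "0 \<le> c" using p_pos by (simp add: c_def)
  ultimately show ?thesis using that by blast
qed

lemma stationary_dist_eq_ghoc_stationary:
  assumes "stationary_dist p \<sigma>"
  shows "\<sigma> = ghoc_stationary p"
proof -
  obtain c where c: "0 \<le> c" and pmf_eq: "\<And>s. pmf \<sigma> s = c * ghoc_weight p s"
    using stationary_dist_proportional[OF assms] by blast
  have "1 = (\<integral>\<^sup>+s. ennreal (pmf \<sigma> s) \<partial>count_space UNIV)"
    by (simp add: nn_integral_pmf)
  also have "\<dots> = (\<integral>\<^sup>+s. ennreal c * ennreal (ghoc_weight p s) \<partial>count_space UNIV)"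
    using c by (intro nn_integral_cong) (simp add: pmf_eq ennreal_mult ghoc_weight_nonneg)
  also have "\<dots> = ennreal c"
    by (simp add: nn_integral_cmult nn_integral_ghoc_weight)
  finally have "c = 1" using c by (metis ennreal_eq_1)
  then show ?thesis by (intro pmf_eqI) (simp add: pmf_eq pmf_ghoc_stationary)
qed

end

lemma stationary_chain_law_cylinder:
  assumes "stationary_chain_law p \<pi> P" and "xs \<noteq> []"
  shows "emeasure P (cylinder k xs) = ennreal (pmf \<pi> (xs ! 0) * (\<Prod>j<length xs - 1. Pi_p p (xs ! j) (xs ! Suc j)))"
proof -
  have "space P = UNIV"
    using assms(1) sets_eq_imp_space_eq[of P S_path_M] by (simp add: stationary_chain_law_def)
  then show ?thesis
    using assms unfolding stationary_chain_law_def cylinder_def by simp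
qed

context ghoc_parameter
begin

lemma stationary_chain_law_eq_ghoc_law:
  assumes "stationary_chain_law p (ghoc_stationary p) P"
  shows "P = ghoc_law p"
proof (rule measure_eqI_cylinders)
  show "sets P = sets (\<Pi>\<^sub>M i\<in>UNIV. count_space UNIV)" "sets (ghoc_law p) = sets (\<Pi>\<^sub>M i\<in>UNIV. count_space UNIV)"
    using assms by (simp_all add: stationary_chain_law_def S_path_M_def)
  show "finite_measure P"
    using assms by (simp add: stationary_chain_law_def prob_space.finite_measure)
  show "emeasure P (cylinder k xs) = emeasure (ghoc_law p) (cylinder k xs)" if "xs \<noteq> []" for k xs
    using stationary_chain_law_cylinder[OF assms that]
      stationary_chain_law_cylinder[OF ghoc_law_stationary_chain_law that] by simp
qed

end

theorem theorem3p7: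
  fixes p :: real
  assumes "0 < p" and "p < 1"
  shows "(\<exists>!\<pi>. stationary_dist p \<pi>)
         \<and> (\<forall>\<pi>. stationary_dist p \<pi> \<longrightarrow>
               (\<exists>P. stationary_chain_law p \<pi> P)
             \<and> (\<forall>P. stationary_chain_law p \<pi> P \<longrightarrow>
                  distr P Omega_M (\<lambda>n i. tau (n i)) = TBF p))"
proof -
  interpret ghoc_parameter p
    using assms by unfold_locales
  have stationary_iff: "stationary_dist p \<pi> \<longleftrightarrow> \<pi> = ghoc_stationary p" for \<pi>
    using stationary_dist_ghoc_stationary stationary_dist_eq_ghoc_stationary by blast
  show ?thesis
    unfolding stationary_iff
    using ghoc_law_stationary_chain_law stationary_chain_law_eq_ghoc_law distr_tau_ghoc_law by auto
qed

end
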